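(* There is an absolute constant $C$ such that for every graph $G$ with a proper vertex coloring $c:V\to[q]$, the threshold graph $G'$ constructed from $(G,q)$ as described in the context has treewidth at most $Cq^2$ (i.e., $G'$ has treewidth $O(q^2)$).
   Context: Construction of $G'$: let $G=(V,E)$, $n=|V|$, $m=|E|$, $V_c$ the nodes of color $c$ and, for distinct $c,d$, $E_{cd}$ the edges between $V_c$ and $V_d$. A parallel-paths gadget of size $h$ between nodes $x,y$ consists of $h$ new "connection" nodes, each adjacent exactly to $x$ and $y$. For each $c\in[q]$ add a node $x_v$ for each $v\in V_c$ and a guard node $g_c$ adjacent to all these $x_v$. For each unordered pair $\{c,d\}$ of distinct colors add a node $x_{u,v}$ for each edge $(u,v)\in E_{cd}$ and a guard node $g_{cd}$ adjacent to all of them. Assign to each $v\in V$ a distinct $low(v)\in[n]$ and set $high(v)=2n-low(v)$. For each unordered pair $\{c,d\}$ and each of its two colors, say $c$, add two validation nodes $\alpha,\beta$: $\alpha$ is joined to each $x_v$ ($v\in V_c$) by a parallel-paths gadget of size $high(v)$ and to each $x_{u,v}$ with $(u,v)\in E_{cd}$, $v\in V_c$, by a parallel-paths gadget of size $low(v)$; $\beta$ is joined to each such $x_v$ by size $low(v)$ and to each such $x_{u,v}$ by size $high(v)$ (symmetrically for color $d$). Finally add a set $B$ of $(n-q)(2nq-2n+1)+\left(m-\binom q2\right)(4n+1)$ independent nodes, each adjacent to every guard node. (Thresholds are irrelevant for treewidth.) *)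

theory Defs
  imports Main
begin

definition simple_graph :: "'a set \<Rightarrow> 'a set set \<Rightarrow> bool" where
  "simple_graph V E \<longleftrightarrow> finite V \<and> (\<forall>e\<in>E. \<exists>u v. e = {u, v} \<and> u \<noteq> v \<and> u \<in> V \<and> v \<in> V)"

definition adj_in :: "'a set \<Rightarrow> 'a set set \<Rightarrow> ('a \<times> 'a) set" where
  "adj_in S E = {(a, b). {a, b} \<in> E \<and> a \<in> S \<and> b \<in> S}"

definition connected_on :: "'a set \<Rightarrow> 'a set set \<Rightarrow> bool" where
  "connected_on S E \<longleftrightarrow> (\<forall>x\<in>S. \<forall>y\<in>S. (x, y) \<in> (adj_in S E)\<^sup>*)"

text \<open>A tree: a nonempty finite connected simple graph that is acyclic; acyclicity is
  expressed as: no edge lies on a cycle, i.e. every edge is a bridge.\<close>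
definition is_tree :: "'a set \<Rightarrow> 'a set set \<Rightarrow> bool" where
  "is_tree I F \<longleftrightarrow> simple_graph I F \<and> I \<noteq> {} \<and> connected_on I F \<and>
     (\<forall>e\<in>F. \<not> connected_on I (F - {e}))"

definition tree_decomposition ::
  "'a set \<Rightarrow> 'a set set \<Rightarrow> nat set \<Rightarrow> nat set set \<Rightarrow> (nat \<Rightarrow> 'a set) \<Rightarrow> bool" where
  "tree_decomposition V E I F bag \<longleftrightarrow>
     is_tree I F \<and>
     (\<forall>i\<in>I. bag i \<subseteq> V) \<and>
     (\<forall>v\<in>V. \<exists>i\<in>I. v \<in> bag i) \<and>
     (\<forall>e\<in>E. \<exists>i\<in>I. e \<subseteq> bag i) \<and>
     (\<forall>v\<in>V. connected_on {i\<in>I. v \<in> bag i} {f\<in>F. f \<subseteq> {i\<in>I. v \<in> bag i}})"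

definition decomp_width :: "nat set \<Rightarrow> (nat \<Rightarrow> 'a set) \<Rightarrow> nat" where
  "decomp_width I bag = Max ((\<lambda>i. card (bag i)) ` I) - 1"

definition treewidth :: "'a set \<Rightarrow> 'a set set \<Rightarrow> nat" where
  "treewidth V E = (LEAST w. \<exists>I F bag. tree_decomposition V E I F bag \<and> decomp_width I bag = w)"

text \<open>Unordered colour pairs {c,d} are represented by c < d.
  Alpha c d k / Beta c d k are the validation nodes of pair {c,d} for colour k \<in> {c,d}.
  Conn a x i is the i-th connection node of the parallel-paths gadget between a and x.
  BN j is the j-th node of the set B.\<close>
datatype gnode = XV nat | GC nat | XE "nat set" | GCP nat nat
  | Alpha nat nat nat | Beta nat nat nat | Conn gnode gnode nat | BN nat

definition proper_coloring :: "nat set \<Rightarrow> nat set set \<Rightarrow> (nat \<Rightarrow> nat) \<Rightarrow> nat \<Rightarrow> bool" where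
  "proper_coloring V E col q \<longleftrightarrow> (\<forall>v\<in>V. col v \<in> {1..q}) \<and>
     (\<forall>u v. {u, v} \<in> E \<longrightarrow> u \<noteq> v \<longrightarrow> col u \<noteq> col v)"

definition color_pairs :: "nat \<Rightarrow> (nat \<times> nat) set" where
  "color_pairs q = {(c, d). 1 \<le> c \<and> c < d \<and> d \<le> q}"

definition guards :: "nat \<Rightarrow> gnode set" where
  "guards q = GC ` {1..q} \<union> (case_prod GCP) ` color_pairs q"

definition high :: "nat \<Rightarrow> (nat \<Rightarrow> nat) \<Rightarrow> nat \<Rightarrow> nat" where
  "high n low v = 2 * n - low v"

text \<open>The gadgets (a, x, h): a parallel-paths gadget of size h between a and x.\<close>
definition gadgets :: "nat set \<Rightarrow> nat set set \<Rightarrow> (nat \<Rightarrow> nat) \<Rightarrow> nat \<Rightarrow> (nat \<Rightarrow> nat)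
    \<Rightarrow> (gnode \<times> gnode \<times> nat) set" where
  "gadgets V E col q low = (let n = card V in
     {(Alpha c d k, XV v, high n low v) | c d k v.
        (c, d) \<in> color_pairs q \<and> k \<in> {c, d} \<and> v \<in> V \<and> col v = k} \<union>
     {(Alpha c d k, XE e, low v) | c d k e v.
        (c, d) \<in> color_pairs q \<and> k \<in> {c, d} \<and> e \<in> E \<and> col ` e = {c, d} \<and> v \<in> e \<and> col v = k} \<union>
     {(Beta c d k, XV v, low v) | c d k v.
        (c, d) \<in> color_pairs q \<and> k \<in> {c, d} \<and> v \<in> V \<and> col v = k} \<union>
     {(Beta c d k, XE e, high n low v) | c d k e v.
        (c, d) \<in> color_pairs q \<and> k \<in> {c, d} \<and> e \<in> E \<and> col ` e = {c, d} \<and> v \<in> e \<and> col v = k})"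

text \<open>Size of the set B (natural-number subtraction).\<close>
definition B_size :: "nat set \<Rightarrow> nat set set \<Rightarrow> nat \<Rightarrow> nat" where
  "B_size V E q = (let n = card V; m = card E in
     (n - q) * (2 * n * q - 2 * n + 1) + (m - (q choose 2)) * (4 * n + 1))"

definition G'_nodes :: "nat set \<Rightarrow> nat set set \<Rightarrow> (nat \<Rightarrow> nat) \<Rightarrow> nat \<Rightarrow> (nat \<Rightarrow> nat) \<Rightarrow> gnode set" where
  "G'_nodes V E col q low =
     XV ` V \<union> GC ` {1..q} \<union> XE ` E \<union> (case_prod GCP) ` color_pairs q \<union>
     {Alpha c d k | c d k. (c, d) \<in> color_pairs q \<and> k \<in> {c, d}} \<union>
     {Beta c d k | c d k. (c, d) \<in> color_pairs q \<and> k \<in> {c, d}} \<union>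
     {Conn a x i | a x h i. (a, x, h) \<in> gadgets V E col q low \<and> i < h} \<union>
     BN ` {..<B_size V E q}"

definition G'_edges :: "nat set \<Rightarrow> nat set set \<Rightarrow> (nat \<Rightarrow> nat) \<Rightarrow> nat \<Rightarrow> (nat \<Rightarrow> nat) \<Rightarrow> gnode set set" where
  "G'_edges V E col q low =
     {{GC c, XV v} | c v. c \<in> {1..q} \<and> v \<in> V \<and> col v = c} \<union>
     {{GCP c d, XE e} | c d e. (c, d) \<in> color_pairs q \<and> e \<in> E \<and> col ` e = {c, d}} \<union>
     {{a, Conn a x i} | a x h i. (a, x, h) \<in> gadgets V E col q low \<and> i < h} \<union>
     {{Conn a x i, x} | a x h i. (a, x, h) \<in> gadgets V E col q low \<and> i < h} \<union>
     {{BN j, g} | j g. j < B_size V E q \<and> g \<in> guards q}"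

end

theory Submission
  imports Defs
begin

(* Let K be the O(q^2) guard and validation nodes. Every edge of G' avoiding K is an edge
   Conn a x i -- x of a parallel-paths gadget, so G' - K is a disjoint union of stars (each
   x_v or x_(u,v) with its connection nodes) and isolated nodes. Mapping every connection node
   to the centre of its star is an idempotent map p with each edge contained in K + {y, p y}
   for some y outside K. A depth-two tree with bags K and K + {y, p y} is then a tree
   decomposition of width |K| + 1. *)

lemma sym_adj_in: "sym (adj_in S E)"
  by (auto simp: sym_def adj_in_def insert_commute)

lemma connected_on_hub:
  assumes "h \<in> S" and "\<And>x. x \<in> S \<Longrightarrow> (x, h) \<in> (adj_in S E)\<^sup>*"
  shows "connected_on S E"
  unfolding connected_on_def
  by (metis assms rtrancl_trans symD sym_rtrancl sym_adj_in)

lemma treewidth_le_of_tree_decomposition: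
  assumes td: "tree_decomposition V E I F bag" and bag_card: "\<And>i. i \<in> I \<Longrightarrow> card (bag i) \<le> b"
  shows "treewidth V E \<le> b - 1"
proof -
  have "finite I" "I \<noteq> {}"
    using td by (auto simp: tree_decomposition_def is_tree_def simple_graph_def)
  then have "decomp_width I bag \<le> b - 1"
    using bag_card by (simp add: decomp_width_def diff_le_mono)
  moreover have "treewidth V E \<le> decomp_width I bag"
    unfolding treewidth_def by (rule Least_le) (use td in blast)
  ultimately show ?thesis by simp
qed

locale parent_tree =
  fixes I :: "'a set" and root :: 'a and par :: "'a \<Rightarrow> 'a" and rank :: "'a \<Rightarrow> nat"
  assumes finite_nodes: "finite I" and root_in: "root \<in> I"
    and par_in: "\<And>i. i \<in> I - {root} \<Longrightarrow> par i \<in> I"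
    and rank_par_less: "\<And>i. i \<in> I - {root} \<Longrightarrow> rank (par i) < rank i"
begin

definition edges :: "'a set set" where
  "edges = (\<lambda>i. {i, par i}) ` (I - {root})"

lemma par_neq_self: "i \<in> I - {root} \<Longrightarrow> par i \<noteq> i"
  using rank_par_less by fastforce

lemma edges_subset: "f \<in> edges \<Longrightarrow> f \<subseteq> I"
  using par_in by (auto simp: edges_def)

lemma adj_in_par: "i \<in> I - {root} \<Longrightarrow> (i, par i) \<in> adj_in I edges"
  using par_in by (auto simp: adj_in_def edges_def)

lemma reaches_root: "i \<in> I \<Longrightarrow> (i, root) \<in> (adj_in I edges)\<^sup>*"
proof (induction "rank i" arbitrary: i rule: less_induct)
  case less
  show ?case
  proof (cases "i = root")
    case False
    then have "(par i, root) \<in> (adj_in I edges)\<^sup>*"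
      using less par_in rank_par_less by blast
    then show ?thesis
      using adj_in_par False less.prems by (blast intro: converse_rtrancl_into_rtrancl)
  qed simp
qed

lemma connected_on_edges: "connected_on I edges"
  using connected_on_hub[OF root_in] reaches_root by blast

lemma edge_is_bridge:
  assumes "e \<in> edges"
  shows "\<not> connected_on I (edges - {e})"
proof
  assume conn: "connected_on I (edges - {e})"
  from assms obtain i where i: "i \<in> I - {root}" "e = {i, par i}"
    by (auto simp: edges_def)
  (* The subtree below i is closed under the remaining edges but misses the root. *)
  define P where "P = {(j, par j) | j. j \<in> I - {root}}"
  define below where "below = {j. (j, i) \<in> P\<^sup>*}"
  have "adj_in I (edges - {e}) `` below \<subseteq> below"
  proof
    fix b assume "b \<in> adj_in I (edges - {e}) `` below"
    then obtain a where a: "a \<in> below" and ab_edge: "{a, b} \<in> edges - {e}"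
      by (auto simp: adj_in_def)
    then obtain j where j: "j \<in> I - {root}" "{a, b} = {j, par j}"
      by (auto simp: edges_def)
    with ab_edge i have "j \<noteq> i"
      by auto
    have ab: "a = j \<and> b = par j \<or> a = par j \<and> b = j"
      using j(2) by (auto simp: doubleton_eq_iff)
    from ab show "b \<in> below"
    proof
      assume "a = j \<and> b = par j"
      with a j \<open>j \<noteq> i\<close> show "b \<in> below"
        by (auto simp: below_def P_def elim: converse_rtranclE)
    next
      assume "a = par j \<and> b = j"
      with a j show "b \<in> below"
        by (auto simp: below_def P_def intro: converse_rtrancl_into_rtrancl)
    qed
  qed
  then have "(adj_in I (edges - {e}))\<^sup>* `` below = below"
    by (rule Image_closed_trancl)
  moreover have "(i, root) \<in> (adj_in I (edges - {e}))\<^sup>*"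
    using conn i root_in by (auto simp: connected_on_def)
  moreover have "i \<in> below"
    by (simp add: below_def)
  ultimately have "root \<in> below"
    by blast
  then show False
    using i by (auto simp: below_def P_def elim: converse_rtranclE)
qed

lemma is_tree_edges: "is_tree I edges"
proof -
  have "simple_graph I edges"
    unfolding simple_graph_def edges_def using finite_nodes par_in par_neq_self by blast
  then show ?thesis
    unfolding is_tree_def using root_in connected_on_edges edge_is_bridge by blast
qed

lemma connected_on_children:
  assumes "S \<subseteq> I" and "h \<in> S" and children: "\<And>j. j \<in> S - {h} \<Longrightarrow> j \<noteq> root \<and> par j = h"
  shows "connected_on S {f \<in> edges. f \<subseteq> S}"
proof (rule connected_on_hub[OF \<open>h \<in> S\<close>])
  fix j assume "j \<in> S"
  show "(j, h) \<in> (adj_in S {f \<in> edges. f \<subseteq> S})\<^sup>*"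
  proof (cases "j = h")
    case False
    with \<open>j \<in> S\<close> children \<open>S \<subseteq> I\<close> \<open>h \<in> S\<close>
    have "(j, h) \<in> adj_in S {f \<in> edges. f \<subseteq> S}"
      by (force simp: adj_in_def edges_def)
    then show ?thesis by blast
  qed simp
qed

end


lemma tree_decomposition_retraction:
  fixes V :: "'a set" and p :: "'a \<Rightarrow> 'a"
  assumes "finite V" and "K \<subseteq> V"
    and p_in: "\<And>y. y \<in> V - K \<Longrightarrow> p y \<in> V - K"
    and p_idem: "\<And>y. y \<in> V - K \<Longrightarrow> p (p y) = p y"
    and edge_cover: "\<And>e. e \<in> E \<Longrightarrow> e \<subseteq> K \<or> (\<exists>y \<in> V - K. e \<subseteq> K \<union> {y, p y})"
  obtains I F bag where "tree_decomposition V E I F bag"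
    and "\<And>i. i \<in> I \<Longrightarrow> card (bag i) \<le> card K + 2"
proof -
  define W where "W = V - K"
  obtain f :: "'a \<Rightarrow> nat" where "inj_on f W"
    using finite_imp_inj_to_nat_seg \<open>finite V\<close> by (metis W_def finite_Diff)
  define \<iota> where "\<iota> = Suc \<circ> f"
  have inj: "inj_on \<iota> W"
    using \<open>inj_on f W\<close> by (simp add: \<iota>_def inj_on_def)
  define g where "g = inv_into W \<iota>"
  have g_\<iota>[simp]: "g (\<iota> y) = y" if "y \<in> W" for y
    using inj that by (simp add: g_def)
  have \<iota>_nonzero[simp]: "\<iota> y \<noteq> 0" for y
    by (simp add: \<iota>_def)
  have pW: "p y \<in> W" "p (p y) = p y" if "y \<in> W" for y
    using that p_in p_idem by (auto simp: W_def)
  (* Node 0 has bag K; each y outside K gets the node \<iota> y with bag K + {y, p y}, a child of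
     the root if p y = y and of \<iota> (p y) otherwise. The nodes whose bag contains y are thus
     \<iota> y and some of its children. *)
  define I where "I = insert 0 (\<iota> ` W)"
  define par where "par i = (if p (g i) = g i then 0 else \<iota> (p (g i)))" for i
  define rank where "rank i = (if i = 0 then 0 else if p (g i) = g i then 1 else 2 :: nat)" for i
  define bag where "bag i = (if i = 0 then K else K \<union> {g i, p (g i)})" for i
  interpret parent_tree I 0 par rank
    using \<open>finite V\<close> pW by unfold_locales (auto simp: I_def par_def rank_def W_def)
  have "tree_decomposition V E I edges bag"
    unfolding tree_decomposition_def
  proof (intro conjI ballI)
    show "is_tree I edges"
      by (rule is_tree_edges)
  next
    fix i assume "i \<in> I"
    then show "bag i \<subseteq> V"
      using \<open>K \<subseteq> V\<close> pW by (auto simp: I_def bag_def W_def)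
  next
    fix v assume "v \<in> V"
    then show "\<exists>i \<in> I. v \<in> bag i"
      by (cases "v \<in> K") (auto simp: I_def bag_def W_def intro!: bexI[of _ "\<iota> v"])
  next
    fix e assume "e \<in> E"
    then show "\<exists>i \<in> I. e \<subseteq> bag i"
      using edge_cover by (auto simp: I_def bag_def W_def)
  next
    fix v assume "v \<in> V"
    show "connected_on {i \<in> I. v \<in> bag i} {f \<in> edges. f \<subseteq> {i \<in> I. v \<in> bag i}}"
    proof (cases "v \<in> K")
      case True
      then have "{i \<in> I. v \<in> bag i} = I"
        by (auto simp: bag_def)
      then show ?thesis
        using connected_on_edges edges_subset by (simp add: Collect_conj_eq Int_absorb2 subset_iff)
    next
      case False
      show ?thesis
      proof (rule connected_on_children)
        show "\<iota> v \<in> {i \<in> I. v \<in> bag i}"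
          using \<open>v \<in> V\<close> False by (simp add: I_def bag_def W_def)
      next
        fix j assume "j \<in> {i \<in> I. v \<in> bag i} - {\<iota> v}"
        then obtain z where "z \<in> W" "j = \<iota> z" "z \<noteq> v" "v = p z"
          using False by (auto simp: I_def bag_def) metis
        then show "j \<noteq> 0 \<and> par j = \<iota> v"
          using pW by (auto simp: par_def)
      qed auto
    qed
  qed
  moreover have "card (bag i) \<le> card K + 2" for i
    using finite_subset[OF \<open>K \<subseteq> V\<close> \<open>finite V\<close>]
    by (simp add: bag_def card_insert_if)
  ultimately show ?thesis
    using that by blast
qed

definition validation_nodes :: "nat \<Rightarrow> gnode set" where
  "validation_nodes q =
     {Alpha c d k | c d k. (c, d) \<in> color_pairs q \<and> k \<in> {c, d}} \<union>
     {Beta c d k | c d k. (c, d) \<in> color_pairs q \<and> k \<in> {c, d}}"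

definition core_nodes :: "nat \<Rightarrow> gnode set" where
  "core_nodes q = guards q \<union> validation_nodes q"

definition gadget_endpoint :: "gnode \<Rightarrow> gnode" where
  "gadget_endpoint y = (case y of Conn a x i \<Rightarrow> x | _ \<Rightarrow> y)"

lemma color_pairs_subset: "color_pairs q \<subseteq> {1..q} \<times> {1..q}"
  by (auto simp: color_pairs_def)

lemma finite_color_pairs: "finite (color_pairs q)"
  using color_pairs_subset finite_subset by blast

lemma card_color_pairs_le: "card (color_pairs q) \<le> q * q"
  using card_mono[OF _ color_pairs_subset] by simp

lemma card_guards_le: "card (guards q) \<le> q + q * q"
proof -
  have "card (guards q) \<le> card (GC ` {1..q}) + card (case_prod GCP ` color_pairs q)"
    unfolding guards_def by (rule card_Un_le)
  also have "\<dots> \<le> card {1..q} + card (color_pairs q)"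
    by (intro add_mono card_image_le finite_color_pairs finite_atLeastAtMost)
  finally show ?thesis
    using card_color_pairs_le[of q] by simp
qed

lemma validation_nodes_subset_image:
  "validation_nodes q \<subseteq> (\<lambda>((c, d), s, t). (if s then Alpha else Beta) c d (if t then c else d))
     ` (color_pairs q \<times> {True, False} \<times> {True, False})"
  by (auto simp: validation_nodes_def image_iff) force+

lemma finite_validation_nodes: "finite (validation_nodes q)"
  by (rule finite_subset[OF validation_nodes_subset_image]) (simp add: finite_color_pairs)

lemma card_validation_nodes_le: "card (validation_nodes q) \<le> 4 * (q * q)"
proof -
  have "card (validation_nodes q) \<le> card (color_pairs q \<times> {True, False} \<times> {True, False})"
    by (rule surj_card_le[OF _ validation_nodes_subset_image]) (simp add: finite_color_pairs)
  also have "\<dots> = 4 * card (color_pairs q)"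
    by (simp add: card_cartesian_product)
  finally show ?thesis
    using card_color_pairs_le[of q] by simp
qed

lemma edge_subset_vertices: "simple_graph V E \<Longrightarrow> e \<in> E \<Longrightarrow> e \<subseteq> V"
  by (auto simp: simple_graph_def)

lemma finite_edges: "simple_graph V E \<Longrightarrow> finite E"
  by (meson Pow_iff edge_subset_vertices finite_Pow_iff finite_subset simple_graph_def subsetI)

lemma gadget_source_in_validation_nodes: "(a, x, h) \<in> gadgets V E col q low \<Longrightarrow> a \<in> validation_nodes q"
  by (auto simp: gadgets_def validation_nodes_def Let_def)

lemma gadgets_subset:
  assumes "simple_graph V E" and "low ` V \<subseteq> {1..card V}"
  shows "gadgets V E col q low \<subseteq> validation_nodes q \<times> (XV ` V \<union> XE ` E) \<times> {..2 * card V}"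
proof -
  have low_le: "low v \<le> 2 * card V" if "v \<in> V" for v
    using assms(2) that by auto
  have "v \<in> V" if "v \<in> e" "e \<in> E" for v e
    using edge_subset_vertices[OF assms(1) that(2)] that(1) by blast
  then show ?thesis
    unfolding gadgets_def Let_def
    by (auto simp: validation_nodes_def high_def intro: low_le)
qed

lemma card_core_nodes_le: "card (core_nodes q) \<le> q + 5 * (q * q)"
  using card_Un_le[of "guards q" "validation_nodes q"] card_guards_le[of q] card_validation_nodes_le[of q]
  unfolding core_nodes_def by linarith

lemma not_in_core_nodes [simp]:
  "XV v \<notin> core_nodes q" "XE e \<notin> core_nodes q" "Conn a x i \<notin> core_nodes q" "BN j \<notin> core_nodes q"
  by (auto simp: core_nodes_def guards_def validation_nodes_def)

lemma finite_G'_nodes: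
  assumes "simple_graph V E" and "low ` V \<subseteq> {1..card V}"
  shows "finite (G'_nodes V E col q low)"
proof -
  let ?D = "validation_nodes q \<times> (XV ` V \<union> XE ` E) \<times> {..2 * card V}"
  have "{Conn a x i | a x h i. (a, x, h) \<in> gadgets V E col q low \<and> i < h}
      \<subseteq> (\<lambda>(a, x, i). Conn a x i) ` ?D"
  proof (rule subsetI)
    fix y assume "y \<in> {Conn a x i | a x h i. (a, x, h) \<in> gadgets V E col q low \<and> i < h}"
    then obtain a x h i where "y = Conn a x i" "(a, x, h) \<in> gadgets V E col q low" "i < h"
      by blast
    with gadgets_subset[OF assms] show "y \<in> (\<lambda>(a, x, i). Conn a x i) ` ?D"
      by (force intro: image_eqI[where x = "(a, x, i)"])
  qed
  moreover have "finite ?D"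
    using assms(1) by (simp add: finite_validation_nodes finite_edges simple_graph_def)
  moreover have "{Alpha c d k | c d k. (c, d) \<in> color_pairs q \<and> k \<in> {c, d}} \<union>
      {Beta c d k | c d k. (c, d) \<in> color_pairs q \<and> k \<in> {c, d}} = validation_nodes q"
    by (simp add: validation_nodes_def)
  ultimately show ?thesis
    using assms(1) finite_validation_nodes[of q]
    by (simp add: G'_nodes_def finite_edges finite_color_pairs simple_graph_def finite_subset Un_assoc)
qed

lemma Conn_in_G'_nodes_iff:
  "Conn a x i \<in> G'_nodes V E col q low \<longleftrightarrow> (\<exists>h. (a, x, h) \<in> gadgets V E col q low \<and> i < h)"
  by (auto simp: G'_nodes_def)

lemma gadget_endpoint_retraction:
  assumes "simple_graph V E" and "low ` V \<subseteq> {1..card V}"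
    and "y \<in> G'_nodes V E col q low - core_nodes q"
  shows "gadget_endpoint y \<in> G'_nodes V E col q low - core_nodes q"
    and "gadget_endpoint (gadget_endpoint y) = gadget_endpoint y"
proof -
  have "gadget_endpoint y \<in> XV ` V \<union> XE ` E" if y: "y = Conn a x i" for a x i
  proof -
    obtain h where "(a, x, h) \<in> gadgets V E col q low"
      using assms(3) y Conn_in_G'_nodes_iff by blast
    then show ?thesis
      using gadgets_subset[OF assms(1,2)] y by (auto simp: gadget_endpoint_def)
  qed
  then show "gadget_endpoint y \<in> G'_nodes V E col q low - core_nodes q"
    and "gadget_endpoint (gadget_endpoint y) = gadget_endpoint y"
    using assms(3) by (cases y; force simp: gadget_endpoint_def G'_nodes_def)+
qed

lemma G'_edges_cover:
  assumes "e \<in> G'_edges V E col q low"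
  shows "\<exists>y \<in> G'_nodes V E col q low - core_nodes q.
           e \<subseteq> core_nodes q \<union> {y, gadget_endpoint y}"
  using assms unfolding G'_edges_def
proof (elim UnE CollectE exE conjE)
  fix c v assume "e = {GC c, XV v}" "c \<in> {1..q}" "v \<in> V"
  moreover have "GC c \<in> core_nodes q"
    using \<open>c \<in> {1..q}\<close> by (simp add: core_nodes_def guards_def)
  ultimately show ?thesis
    by (intro bexI[of _ "XV v"]) (auto simp: G'_nodes_def gadget_endpoint_def)
next
  fix c d f assume "e = {GCP c d, XE f}" "(c, d) \<in> color_pairs q" "f \<in> E"
  moreover have "GCP c d \<in> core_nodes q"
    using \<open>(c, d) \<in> color_pairs q\<close> by (force simp: core_nodes_def guards_def)
  ultimately show ?thesis
    by (intro bexI[of _ "XE f"]) (auto simp: G'_nodes_def gadget_endpoint_def)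
next
  fix a x h i assume "e = {a, Conn a x i}" "(a, x, h) \<in> gadgets V E col q low" "i < h"
  moreover have "a \<in> core_nodes q"
    using gadget_source_in_validation_nodes \<open>(a, x, h) \<in> gadgets V E col q low\<close>
    by (simp add: core_nodes_def)
  ultimately show ?thesis
    by (intro bexI[of _ "Conn a x i"]) (auto simp: G'_nodes_def)
next
  fix a x h i assume "e = {Conn a x i, x}" "(a, x, h) \<in> gadgets V E col q low" "i < h"
  then show ?thesis
    by (intro bexI[of _ "Conn a x i"]) (auto simp: G'_nodes_def gadget_endpoint_def)
next
  fix j g assume "e = {BN j, g}" "j < B_size V E q" "g \<in> guards q"
  moreover have "g \<in> core_nodes q"
    using \<open>g \<in> guards q\<close> by (simp add: core_nodes_def)
  ultimately show ?thesis
    by (intro bexI[of _ "BN j"]) (auto simp: G'_nodes_def gadget_endpoint_def)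
qed

lemma core_nodes_subset_G'_nodes: "core_nodes q \<subseteq> G'_nodes V E col q low"
  by (auto simp: G'_nodes_def core_nodes_def guards_def validation_nodes_def)

lemma G'_tree_decomposition:
  assumes "simple_graph V E" and "low ` V \<subseteq> {1..card V}"
  obtains I F bag where "tree_decomposition (G'_nodes V E col q low) (G'_edges V E col q low) I F bag"
    and "\<And>i. i \<in> I \<Longrightarrow> card (bag i) \<le> card (core_nodes q) + 2"
proof (rule tree_decomposition_retraction)
  show "finite (G'_nodes V E col q low)"
    using assms by (rule finite_G'_nodes)
  show "core_nodes q \<subseteq> G'_nodes V E col q low"
    by (rule core_nodes_subset_G'_nodes)
  fix y assume y: "y \<in> G'_nodes V E col q low - core_nodes q"
  show "gadget_endpoint y \<in> G'_nodes V E col q low - core_nodes q"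
    using assms y by (rule gadget_endpoint_retraction)
  show "gadget_endpoint (gadget_endpoint y) = gadget_endpoint y"
    using assms y by (rule gadget_endpoint_retraction)
next
  fix e assume "e \<in> G'_edges V E col q low"
  then show "e \<subseteq> core_nodes q \<or>
      (\<exists>y \<in> G'_nodes V E col q low - core_nodes q.
        e \<subseteq> core_nodes q \<union> {y, gadget_endpoint y})"
    by (blast dest: G'_edges_cover)
qed (rule that)

lemma G'_nodes_no_colors:
  assumes "simple_graph V E" and "proper_coloring V E col 0"
  shows "G'_nodes V E col 0 low = {}"
proof -
  have "V = {}"
    using assms(2) by (auto simp: proper_coloring_def)
  moreover have "E = {}"
    using assms(1) \<open>V = {}\<close> by (auto simp: simple_graph_def)
  ultimately show ?thesis
    by (simp add: G'_nodes_def gadgets_def color_pairs_def B_size_def)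
qed

theorem lemma3:
  "\<exists>C::nat. \<forall>(V::nat set) E col q low.
     simple_graph V E \<and> proper_coloring V E col q \<and>
     inj_on low V \<and> low ` V \<subseteq> {1..card V}
     \<longrightarrow> treewidth (G'_nodes V E col q low) (G'_edges V E col q low) \<le> C * q\<^sup>2"
proof (intro exI[of _ 7] allI impI)
  fix V :: "nat set" and E col q low
  assume "simple_graph V E \<and> proper_coloring V E col q \<and> inj_on low V \<and> low ` V \<subseteq> {1..card V}"
  then have G: "simple_graph V E" and col: "proper_coloring V E col q"
    and low: "low ` V \<subseteq> {1..card V}"
    by auto
  obtain I F bag where td: "tree_decomposition (G'_nodes V E col q low) (G'_edges V E col q low) I F bag"
    and bag_card: "\<And>i. i \<in> I \<Longrightarrow> card (bag i) \<le> card (core_nodes q) + 2"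
    using G'_tree_decomposition[OF G low] by blast
  show "treewidth (G'_nodes V E col q low) (G'_edges V E col q low) \<le> 7 * q\<^sup>2"
  proof (cases "q = 0")
    case True
    (* Here the general bound card (core_nodes q) + 1 = 1 is too weak, but G' is empty. *)
    then have "\<And>i. i \<in> I \<Longrightarrow> card (bag i) \<le> 0"
      using td G'_nodes_no_colors[OF G] col by (auto simp: tree_decomposition_def)
    then show ?thesis
      using treewidth_le_of_tree_decomposition[OF td] by fastforce
  next
    case False
    then have "q \<le> q * q" "1 \<le> q * q"
      by auto
    with card_core_nodes_le[of q]
    have "card (core_nodes q) + 1 \<le> 7 * q\<^sup>2"
      unfolding power2_eq_square by linarith
    then show ?thesis
      using treewidth_le_of_tree_decomposition[OF td bag_card] by simp
  qed
qed

end
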